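(* Let $m\in[\frac n3,\frac n2-1]$ be an integer and $\delta\in(0,2)$. Let $x$ be a random bit string in $\{0,1\}^n$ such that $\mathrm{DLB}(x)=2m+1$ and such that the bits $x_i$, $i\in[2m+3..n]$, are mutually independent, independent of the other bits, and uniformly distributed in $\{0,1\}$. Let $y$ be generated from $x$ by a unary unbiased variation operator $V$, and let $Y=(\mathrm{HLB}_\delta(y)-\mathrm{HLB}_\delta(x))\mathbb{1}_{\mathrm{DLB}(y)\ge\mathrm{DLB}(x)}$. Then $E[Y]\le\frac{16}{n^2}$.
   Context: Let $n$ be an even positive integer. For $x\in\{0,1\}^n$ consider the blocks $(x_{2\ell+1},x_{2\ell+2})$, $\ell=0,\dots,\frac n2-1$. If $x\neq(1,\dots,1)$, let $m$ be the smallest $\ell$ with $x_{2\ell+1}\neq 1$ or $x_{2\ell+2}\neq 1$, and define $\mathrm{DLB}(x)=2m+1$ if $x_{2m+1}+x_{2m+2}=0$ and $\mathrm{DLB}(x)=2m$ if $x_{2m+1}+x_{2m+2}=1$; set $\mathrm{DLB}(1,\dots,1)=n$. For $\delta\in(0,2)$, $\mathrm{HLB}_\delta(x)=2m$ if $\mathrm{DLB}(x)=2m+1$, $\mathrm{HLB}_\delta(x)=2m+2-\delta$ if $\mathrm{DLB}(x)=2m$ (for $m\in\{0,\dots,\frac n2-1\}$), and $\mathrm{HLB}_\delta(x)=n$ if $\mathrm{DLB}(x)=n$. A unary unbiased variation operator $V$ assigns to each $x\in\{0,1\}^n$ a probability distribution $V(x)$ on $\{0,1\}^n$ such that for all $x,y,z$,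 $\Pr[y=V(x)]=\Pr[y\oplus z=V(x\oplus z)]$, and for all permutations $\sigma$ of $[1..n]$, $\Pr[y=V(x)]=\Pr[\sigma(y)=V(\sigma(x))]$, where $\sigma(x)=(x_{\sigma(1)},\dots,x_{\sigma(n)})$. *)

theory Defs
  imports "HOL-Probability.Probability_Mass_Function" "HOL-Combinatorics.Permutations"
begin

(* Bit strings of length n are bool lists; the paper's 1-based bit x_i is  x ! (i - 1).
   Block l (0-based) consists of x_{2l+1} = x ! (2*l) and x_{2l+2} = x ! (2*l+1). *)

definition DLB :: "nat \<Rightarrow> bool list \<Rightarrow> nat" where
  "DLB n x =
     (if (\<forall>i<n. x ! i) then n
      else (let m = (LEAST l. l < n div 2 \<and> \<not> (x ! (2*l) \<and> x ! (2*l+1)))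
            in if \<not> x ! (2*m) \<and> \<not> x ! (2*m+1) then 2*m+1 else 2*m))"

definition HLB :: "real \<Rightarrow> nat \<Rightarrow> bool list \<Rightarrow> real" where
  "HLB \<delta> n x =
     (let d = DLB n x in
      if d = n then real n
      else if odd d then real (d - 1)
      else real d + 2 - \<delta>)"

definition xor_bits :: "bool list \<Rightarrow> bool list \<Rightarrow> bool list" where
  "xor_bits x z = map2 (\<noteq>) x z"

definition unary_unbiased :: "nat \<Rightarrow> (bool list \<Rightarrow> bool list pmf) \<Rightarrow> bool" where
  "unary_unbiased n V \<longleftrightarrow>
     (\<forall>x. length x = n \<longrightarrow> set_pmf (V x) \<subseteq> {y. length y = n}) \<and>
     (\<forall>x y z. length x = n \<and> length y = n \<and> length z = n \<longrightarrow>
        pmf (V x) y = pmf (V (xor_bits x z)) (xor_bits y z)) \<and>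
     (\<forall>\<sigma> x y. \<sigma> permutes {..<n} \<and> length x = n \<and> length y = n \<longrightarrow>
        pmf (V x) y = pmf (V (permute_list \<sigma> x)) (permute_list \<sigma> y))"

end

theory Submission
  imports Defs
begin

(* Since DLB x = 2m+1, x is 1^(2m) 0 0 followed by k = n - 2m - 2 uniform bits.  An unbiased
   operator produces y = x xor z, where the law of z does not depend on x and depends only on the
   number of ones of z.  Y is nonzero only if z flips exactly the two zeros of block m and none of
   the leading ones; then y begins with 1^(2m+2), its suffix is uniform, and Y <= 4 + dlb(suffix),
   which averages to at most 6.  Every weight level of {0,1}^n meets that flip pattern in a fraction
   C(k, r-2) / C(n, r) <= 2 / (n(n-1)) of its elements (here k <= n/3 - 2 is used), so the pattern
   has probability at most 2 / (n(n-1)), and E[Y] <= 12 / (n(n-1)) <= 16 / n^2. *)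

lemma finite_bool_lists [simp]: "finite {z :: bool list. length z = q}"
  using finite_lists_length_eq[of "UNIV :: bool set" q] by simp

lemma card_bool_lists: "card {z :: bool list. length z = q} = 2 ^ q"
  using card_lists_length_eq[of "UNIV :: bool set" q] by simp

lemma sum_bool_lists_Suc:
  "(\<Sum>z | length z = Suc q. f z) = (\<Sum>z | length z = q. f (True # z) + f (False # z))"
proof -
  have "(\<Sum>z | length z = Suc q. f z) = (\<Sum>(b, z) \<in> UNIV \<times> {z. length z = q}. f (b # z))"
    by (rule sum.reindex_bij_witness[where i = "\<lambda>(b, z). b # z" and j = "\<lambda>z. (hd z, tl z)"])
      (auto simp: length_Suc_conv)
  also have "\<dots> = (\<Sum>b\<in>UNIV. \<Sum>z | length z = q. f (b # z))"
    by (simp add: sum.cartesian_product)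
  finally show ?thesis by (simp add: UNIV_bool sum.distrib add.commute)
qed

lemma sum_bool_lists_append:
  fixes f :: "bool list \<Rightarrow> 'a::comm_monoid_add"
  shows "(\<Sum>z | length z = a + b. f z) = (\<Sum>u | length u = a. \<Sum>v | length v = b. f (u @ v))"
  by (induction a arbitrary: f) (simp_all add: sum_bool_lists_Suc sum.distrib)

lemma count_list_False: "count_list z False = length z - count_list z True"
  by (induction z) (auto simp: Suc_diff_le count_le_length)

lemma mset_eq_if_count_list_True_eq:
  fixes z z' :: "bool list"
  assumes "length z = length z'" "count_list z True = count_list z' True"
  shows "mset z = mset z'"
proof (rule multiset_eqI)
  fix b show "count (mset z) b = count (mset z') b"
    using assms by (cases b) (simp_all add: count_mset count_list_False)
qed

lemma card_bool_lists_count_True: "card {z. length z = n \<and> count_list z True = r} = n choose r"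
proof (induction n arbitrary: r)
  case 0
  have "{z :: bool list. length z = 0 \<and> count_list z True = r} = (if r = 0 then {[]} else {})"
    by auto
  then show ?case by simp
next
  case (Suc n)
  define X where "X = {z. length z = n \<and> Suc (count_list z True) = r}"
  define Y where "Y = {z. length z = n \<and> count_list z True = r}"
  have "finite X" "finite Y"
    unfolding X_def Y_def by (rule finite_subset[OF _ finite_bool_lists[of n]], blast)+
  have "{z. length z = Suc n \<and> count_list z True = r} = Cons True ` X \<union> Cons False ` Y"
    unfolding X_def Y_def by (auto simp: length_Suc_conv image_iff)
  also have "card \<dots> = card X + card Y"
    using \<open>finite X\<close> \<open>finite Y\<close> by (subst card_Un_disjoint) (auto simp: card_image)
  also have "\<dots> = Suc n choose r"
    unfolding X_def Y_def using Suc.IH by (cases r) simp_all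
  finally show ?case .
qed

lemma length_xor_bits [simp]: "length (xor_bits x y) = min (length x) (length y)"
  by (simp add: xor_bits_def)

lemma xor_bits_append:
  "length u = length x \<Longrightarrow> xor_bits (u @ v) (x @ y) = xor_bits u x @ xor_bits v y"
  by (simp add: xor_bits_def)

lemma xor_bits_replicate_True: "xor_bits (replicate (length x) True) x = map Not x"
  by (induction x) (simp_all add: xor_bits_def)

lemma xor_bits_self: "xor_bits x x = replicate (length x) False"
  by (induction x) (simp_all add: xor_bits_def)

lemma xor_bits_cancel: "length s = length t \<Longrightarrow> xor_bits t (xor_bits t s) = s"
  by (induction s t rule: list_induct2) (auto simp: xor_bits_def)

lemma sum_bool_lists_xor_bits:
  assumes "length t = k"
  shows "(\<Sum>s | length s = k. f (xor_bits t s)) = (\<Sum>s | length s = k. f s)"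
  by (rule sum.reindex_bij_witness[where i = "xor_bits t" and j = "xor_bits t"])
    (simp_all add: assms xor_bits_cancel)

fun dlb :: "bool list \<Rightarrow> nat" where
  "dlb (True # True # t) = Suc (Suc (dlb t))"
| "dlb (False # False # _) = 1"
| "dlb _ = 0"

lemma DLB_Cons_True_True:
  assumes "even n"
  shows "DLB (Suc (Suc n)) (True # True # t) = Suc (Suc (DLB n t))"
proof (cases "\<forall>i<n. t ! i")
  case True
  then have "\<forall>i<Suc (Suc n). (True # True # t) ! i" by (auto simp: less_Suc_eq nth_Cons')
  with True show ?thesis by (simp add: DLB_def)
next
  case False
  then obtain i where i: "i < n" "\<not> t ! i" by blast
  define P where "P = (\<lambda>l. l < n div 2 \<and> \<not> (t ! (2*l) \<and> t ! (2*l+1)))"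
  define Q where
    "Q = (\<lambda>l. l < Suc (Suc n) div 2 \<and> \<not> ((True # True # t) ! (2*l) \<and> (True # True # t) ! (2*l+1)))"
  have "i = 2 * (i div 2) \<or> i = 2 * (i div 2) + 1" by presburger
  moreover have "i div 2 < n div 2" using i(1) \<open>even n\<close> by (auto elim!: evenE)
  ultimately have "P (i div 2)" using i(2) unfolding P_def by auto
  moreover have QP: "Q (Suc l) \<longleftrightarrow> P l" for l by (simp add: P_def Q_def)
  ultimately have "Least Q = Suc (LEAST l. Q (Suc l))"
    by (intro Least_Suc[of _ "Suc (i div 2)"]) (simp_all add: Q_def)
  then have LQ: "Least Q = Suc (Least P)" by (simp only: QP)
  have "\<not> (\<forall>i<Suc (Suc n). (True # True # t) ! i)" using i by (metis Suc_less_eq nth_Cons_Suc)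
  then have "DLB (Suc (Suc n)) (True # True # t)
      = (if \<not> (True # True # t) ! (2 * Least Q) \<and> \<not> (True # True # t) ! (2 * Least Q + 1)
         then 2 * Least Q + 1 else 2 * Least Q)"
    unfolding DLB_def Let_def Q_def by (simp only: if_False)
  moreover have "DLB n t
      = (if \<not> t ! (2 * Least P) \<and> \<not> t ! (2 * Least P + 1) then 2 * Least P + 1 else 2 * Least P)"
    using False unfolding DLB_def Let_def P_def by (simp only: if_False)
  ultimately show ?thesis unfolding LQ by simp
qed

lemma DLB_Cons_Cons_not_both_True:
  assumes "\<not> (a \<and> b)"
  shows "DLB (Suc (Suc n)) (a # b # t) = (if \<not> a \<and> \<not> b then 1 else 0)"
proof -
  have "\<not> (\<forall>i<Suc (Suc n). (a # b # t) ! i)" using assms by force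
  moreover have
    "(LEAST l. l < Suc (Suc n) div 2 \<and> \<not> ((a # b # t) ! (2*l) \<and> (a # b # t) ! (2*l+1))) = 0"
    by (rule Least_eq_0) (simp add: assms)
  ultimately have "DLB (Suc (Suc n)) (a # b # t)
      = (if \<not> (a # b # t) ! (2*0) \<and> \<not> (a # b # t) ! (2*0+1) then 2*0+1 else 2*0)"
    unfolding DLB_def Let_def by (simp only: if_False)
  then show ?thesis by simp
qed

lemma DLB_eq_dlb: "even (length x) \<Longrightarrow> DLB (length x) x = dlb x"
  by (induction x rule: dlb.induct)
    (simp_all add: DLB_Cons_True_True DLB_Cons_Cons_not_both_True, simp add: DLB_def)

lemma dlb_replicate_True_append:
  assumes "even j"
  shows "dlb (replicate j True @ t) = j + dlb t"
proof -
  obtain i where "j = 2*i" using assms by blast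
  moreover have "dlb (replicate (2*i) True @ t) = 2*i + dlb t" by (induction i) simp_all
  ultimately show ?thesis by simp
qed

lemma dlb_append_not_all_True:
  "even (length u) \<Longrightarrow> u \<noteq> replicate (length u) True \<Longrightarrow> dlb (u @ v) = dlb u"
  by (induction u rule: dlb.induct) auto

lemma dlb_less_length:
  "even (length u) \<Longrightarrow> u \<noteq> replicate (length u) True \<Longrightarrow> dlb u < length u"
  by (induction u rule: dlb.induct) auto

lemma take_dlb_odd: "dlb x = 2*j+1 \<Longrightarrow> take (2*j+2) x = replicate (2*j) True @ [False, False]"
proof (induction x arbitrary: j rule: dlb.induct)
  case (1 t)
  then obtain j' where "j = Suc j'" by (cases j) auto
  with 1 show ?case by simp
qed (auto simp: numeral_2_eq_2)

lemma sum_dlb_le: "(\<Sum>t | length t = q. real (dlb t)) \<le> 2 * 2 ^ q"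
proof (induction q rule: nat_induct2)
  case (step r)
  have "(\<Sum>t | length t = r + 2. real (dlb t)) = (\<Sum>t | length t = r. 3 + real (dlb t))"
    by (simp add: sum_bool_lists_Suc sum.distrib[symmetric])
  also have "\<dots> = 3 * 2 ^ r + (\<Sum>t | length t = r. real (dlb t))"
    by (simp add: sum.distrib card_bool_lists)
  also have "\<dots> \<le> 3 * 2 ^ r + 2 * 2 ^ r"
    using step.IH by simp
  also have "\<dots> \<le> 2 * 2 ^ (r + 2)"
    by simp
  finally show ?case .
qed (simp_all add: sum_bool_lists_Suc)

lemma HLB_le_DLB: "0 \<le> \<delta> \<Longrightarrow> HLB \<delta> n y \<le> real (DLB n y) + 2"
  by (auto simp: HLB_def Let_def)

lemma HLB_DLB_odd: "even n \<Longrightarrow> DLB n y = 2*j + 1 \<Longrightarrow> HLB \<delta> n y = 2*j"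
  by (auto simp: HLB_def Let_def)

definition HLB_gain :: "real \<Rightarrow> nat \<Rightarrow> bool list \<Rightarrow> bool list \<Rightarrow> real" where
  "HLB_gain \<delta> n x y = (HLB \<delta> n y - HLB \<delta> n x) * (if DLB n y \<ge> DLB n x then 1 else 0)"

lemma HLB_gain_from_odd_level:
  assumes "length u = 2*m + 2" "length t = k" "length s = k" "n = 2*m + 2 + k" "even k"
  shows "HLB_gain \<delta> n (replicate (2*m) True @ [False, False] @ s) (u @ t)
       = (if u = replicate (2*m + 2) True then HLB \<delta> n (u @ t) - 2*m else 0)"
proof -
  let ?x = "replicate (2*m) True @ [False, False] @ s"
  have "even n" using assms by simp
  have DLB_dlb: "DLB n z = dlb z" if "length z = n" for z
    using DLB_eq_dlb[of z] that \<open>even n\<close> by simp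
  have "length ?x = n" using assms by simp
  then have DLB_x: "DLB n ?x = 2*m + 1"
    by (simp add: DLB_dlb dlb_replicate_True_append)
  then have HLB_x: "HLB \<delta> n ?x = 2*m"
    using HLB_DLB_odd \<open>even n\<close> by simp
  show ?thesis
  proof (cases "u = replicate (2*m + 2) True")
    case True
    moreover have "length (u @ t) = n" using assms by simp
    ultimately have "DLB n (u @ t) = 2*m + 2 + dlb t"
      by (simp add: DLB_dlb dlb_replicate_True_append)
    then show ?thesis
      using True DLB_x HLB_x by (simp add: HLB_gain_def)
  next
    case False
    have "length (u @ t) = n" using assms by simp
    then have "DLB n (u @ t) = dlb (u @ t)" by (rule DLB_dlb)
    also have "\<dots> = dlb u"
      using False assms(1) dlb_append_not_all_True[of u t] by simp
    finally have "DLB n (u @ t) = dlb u" .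
    moreover have "dlb u < 2*m + 2"
      using False assms(1) dlb_less_length[of u] by simp
    ultimately consider "DLB n (u @ t) = 2*m + 1" | "DLB n (u @ t) < 2*m + 1"
      by linarith
    then show ?thesis
      using False DLB_x HLB_x HLB_DLB_odd[OF \<open>even n\<close>] by cases (simp_all add: HLB_gain_def)
  qed
qed

lemma sum_HLB_replicate_True_append_le:
  assumes "n = 2*m + 2 + k" "even k" "0 \<le> \<delta>"
  shows "(\<Sum>t | length t = k. HLB \<delta> n (replicate (2*m + 2) True @ t) - 2*m) \<le> 6 * 2 ^ k"
proof -
  have "HLB \<delta> n (replicate (2*m + 2) True @ t) - 2*m \<le> 4 + real (dlb t)" if "length t = k" for t
    using HLB_le_DLB[OF \<open>0 \<le> \<delta>\<close>, of n "replicate (2*m + 2) True @ t"]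
      DLB_eq_dlb[of "replicate (2*m + 2) True @ t"] dlb_replicate_True_append[of "2*m + 2" t]
      assms that
    by simp
  then have "(\<Sum>t | length t = k. HLB \<delta> n (replicate (2*m + 2) True @ t) - 2*m)
      \<le> (\<Sum>t | length t = k. 4 + real (dlb t))"
    by (intro sum_mono) simp
  also have "\<dots> \<le> 4 * 2 ^ k + 2 * 2 ^ k"
    using sum_dlb_le[of k] by (simp add: sum.distrib card_bool_lists)
  finally show ?thesis by simp
qed

lemma binomial_ratio_le:
  fixes k N j :: nat
  assumes "3*k + 4 \<le> N"
  shows "(k choose j) * ((j+1) * (j+2)) \<le> 2 * (N choose j)"
proof (induction j)
  case (Suc j)
  have step_k: "(j+1) * (k choose Suc j) = (k - j) * (k choose j)"
    using binomial_absorb_comp[of k j] binomial_absorption[of j k] by simp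
  have step_N: "(j+1) * (N choose Suc j) = (N - j) * (N choose j)"
    using binomial_absorb_comp[of N j] binomial_absorption[of j N] by simp
  \<comment> \<open>one step in j multiplies the ratio of the two sides by (j+3)(k-j) / ((j+1)(N-j)) \<le> 1\<close>
  have ratio: "(j+3) * (k - j) \<le> (j+1) * (N - j)"
  proof -
    have "(j+3) * (k - j) \<le> (3 * (j+1)) * (k - j)" by (rule mult_le_mono1) simp
    also have "\<dots> = (j+1) * (3 * (k - j))" by (simp only: ac_simps)
    also have "\<dots> \<le> (j+1) * (N - j)" using assms by (intro mult_le_mono2) simp
    finally show ?thesis .
  qed
  have "((j+1) * (j+1)) * ((k choose Suc j) * ((j+2) * (j+3)))
      = ((j+1) * (k choose Suc j)) * ((j+1) * (j+2) * (j+3))"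
    by (simp only: ac_simps)
  also have "\<dots> = ((k - j) * (k choose j)) * ((j+1) * (j+2) * (j+3))"
    by (simp only: step_k)
  also have "\<dots> = ((k choose j) * ((j+1) * (j+2))) * ((j+3) * (k - j))"
    by (simp only: ac_simps)
  also have "\<dots> \<le> (2 * (N choose j)) * ((j+1) * (N - j))"
    using Suc.IH ratio by (rule mult_le_mono)
  also have "\<dots> = 2 * (j+1) * ((N - j) * (N choose j))"
    by (simp only: ac_simps)
  also have "\<dots> = 2 * (j+1) * ((j+1) * (N choose Suc j))"
    by (simp only: step_N)
  also have "\<dots> = ((j+1) * (j+1)) * (2 * (N choose Suc j))"
    by (simp only: ac_simps)
  finally show ?case
    by (simp only: mult_le_cancel1) (simp add: algebra_simps)
qed simp

lemma binomial_ratio_shift2_le: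
  assumes "3*k + 6 \<le> n"
  shows "real (k choose j) \<le> 2 / (real n * (real n - 1)) * real (n choose (j+2))"
proof -
  define N where "N = n - 2"
  have n: "n = Suc (Suc N)" and N: "3*k + 4 \<le> N"
    using assms by (simp_all add: N_def)
  have e1: "Suc (Suc j) * (n choose Suc (Suc j)) = n * (Suc N choose Suc j)"
    unfolding n by (rule Suc_times_binomial)
  have e2: "Suc j * (Suc N choose Suc j) = Suc N * (N choose j)"
    by (rule Suc_times_binomial)
  have "Suc j * Suc (Suc j) * ((k choose j) * (n * Suc N))
      = ((k choose j) * (Suc j * Suc (Suc j))) * (n * Suc N)"
    by (simp only: ac_simps)
  also have "\<dots> \<le> 2 * (N choose j) * (n * Suc N)"
    using binomial_ratio_le[OF N, of j] by simp
  also have "\<dots> = 2 * (n * (Suc j * (Suc N choose Suc j)))"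
    by (simp only: e2 ac_simps)
  also have "\<dots> = Suc j * (2 * (n * (Suc N choose Suc j)))"
    by (simp only: ac_simps)
  also have "\<dots> = Suc j * (2 * (Suc (Suc j) * (n choose Suc (Suc j))))"
    by (simp only: e1)
  also have "\<dots> = Suc j * Suc (Suc j) * (2 * (n choose Suc (Suc j)))"
    by (simp only: ac_simps)
  finally have "(k choose j) * (n * Suc N) \<le> 2 * (n choose (j+2))"
    by (simp only: mult_le_cancel1) simp
  then have "real ((k choose j) * (n * Suc N)) \<le> real (2 * (n choose (j+2)))"
    by (rule of_nat_mono)
  moreover have "real n - 1 = real (Suc N)" using n by simp
  ultimately have "real (k choose j) * (real n * (real n - 1)) \<le> 2 * real (n choose (j+2))"
    by (simp only: of_nat_mult of_nat_numeral)
  moreover have "real n * (real n - 1) > 0" using n by simp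
  ultimately show ?thesis by (simp add: field_simps)
qed

lemma sum_le_if_count_symmetric:
  fixes p :: "bool list \<Rightarrow> real"
  assumes nonneg: "\<And>z. 0 \<le> p z"
    and total: "(\<Sum>z | length z = n. p z) = 1"
    and symmetric: "\<And>z z'. length z = n \<Longrightarrow> length z' = n \<Longrightarrow>
                      count_list z True = count_list z' True \<Longrightarrow> p z = p z'"
    and A: "A \<subseteq> {z. length z = n}"
    and level: "\<And>r. r \<le> n \<Longrightarrow> real (card {z \<in> A. count_list z True = r}) \<le> B * real (n choose r)"
  shows "(\<Sum>z\<in>A. p z) \<le> B"
proof -
  define L where "L = {z :: bool list. length z = n}"
  define c where "c z = count_list z True" for z
  define N where "N z = real (n choose c z)" for z
  have N_pos: "N z > 0" if "z \<in> L" for z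
    using that count_le_length[of z True] by (simp add: L_def N_def c_def)
  have card_level: "card {z' \<in> L. c z' = c z} = n choose c z" for z
    using card_bool_lists_count_True[of n "c z"] by (simp add: L_def c_def)
  have "finite L" "finite A"
    using finite_subset[OF A] by (simp_all add: L_def)
  \<comment> \<open>p is constant on each weight level, so p z is the average of p over the level of z\<close>
  have average: "p z = (\<Sum>z'\<in>L. if c z' = c z then p z' / N z' else 0)" if "z \<in> L" for z
  proof -
    have "(\<Sum>z'\<in>L. if c z' = c z then p z' / N z' else 0) = (\<Sum>z'\<in>{z' \<in> L. c z' = c z}. p z' / N z')"
      by (simp add: sum.inter_filter[OF \<open>finite L\<close>])
    also have "\<dots> = (\<Sum>z'\<in>{z' \<in> L. c z' = c z}. p z / N z)"
    proof (rule sum.cong[OF refl])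
      fix z' assume "z' \<in> {z' \<in> L. c z' = c z}"
      then have "p z' = p z" "N z' = N z"
        using that symmetric[of z' z] by (auto simp: L_def N_def c_def)
      then show "p z' / N z' = p z / N z" by simp
    qed
    also have "\<dots> = p z"
      using N_pos[OF that] by (simp add: card_level N_def)
    finally show ?thesis by simp
  qed
  have "(\<Sum>z\<in>A. p z) = (\<Sum>z\<in>A. \<Sum>z'\<in>L. if c z' = c z then p z' / N z' else 0)"
    using A by (intro sum.cong refl average) (auto simp: L_def)
  also have "\<dots> = (\<Sum>z'\<in>L. \<Sum>z\<in>A. if c z = c z' then p z' / N z' else 0)"
    by (subst sum.swap) (simp add: eq_commute)
  also have "\<dots> = (\<Sum>z'\<in>L. p z' / N z' * real (card {z \<in> A. c z = c z'}))"
    by (simp add: sum.inter_filter[OF \<open>finite A\<close>, symmetric] mult.commute)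
  also have "\<dots> \<le> (\<Sum>z'\<in>L. p z' * B)"
  proof (intro sum_mono)
    fix z' assume "z' \<in> L"
    then have "real (card {z \<in> A. c z = c z'}) \<le> B * N z'"
      using level[of "c z'"] count_le_length[of z' True] by (simp add: L_def N_def c_def)
    then have "real (card {z \<in> A. c z = c z'}) / N z' \<le> B"
      using N_pos[OF \<open>z' \<in> L\<close>] by (simp add: pos_divide_le_eq)
    then show "p z' / N z' * real (card {z \<in> A. c z = c z'}) \<le> p z' * B"
      using mult_left_mono[OF _ nonneg[of z']] by fastforce
  qed
  also have "\<dots> = B"
    using total by (simp add: L_def sum_distrib_right[symmetric])
  finally show ?thesis .
qed

lemma unary_unbiased_pmf_xor_bits:
  assumes "unary_unbiased n V" "length x = n" "length y = n"
  shows "pmf (V x) y = pmf (V (replicate n False)) (xor_bits y x)"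
proof -
  have "pmf (V x) y = pmf (V (xor_bits x x)) (xor_bits y x)"
    using assms unfolding unary_unbiased_def by blast
  then show ?thesis using assms(2) by (simp add: xor_bits_self)
qed

lemma unary_unbiased_pmf_mset:
  assumes "unary_unbiased n V" "length z' = n" "mset z = mset z'"
  shows "pmf (V (replicate n False)) z = pmf (V (replicate n False)) z'"
proof -
  obtain \<sigma> where \<sigma>: "\<sigma> permutes {..<n}" "permute_list \<sigma> z' = z"
    using mset_eq_permutation[OF assms(3)] assms(2) by metis
  have "\<forall>b \<in> set (permute_list \<sigma> (replicate n False)). b = False"
    using \<sigma>(1) by (simp add: set_permute_list)
  from replicate_length_same[OF this]
  have perm_zero: "permute_list \<sigma> (replicate n False) = replicate n False" by simp
  have "pmf (V (replicate n False)) z'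
      = pmf (V (permute_list \<sigma> (replicate n False))) (permute_list \<sigma> z')"
    using assms(1) \<sigma>(1) assms(2) length_replicate[of n False] unfolding unary_unbiased_def by blast
  with perm_zero \<sigma>(2) show ?thesis by simp
qed

lemma sum_pmf_prefix_le:
  assumes V: "unary_unbiased n V"
    and R: "length R + k = n" "count_list R True = 2" and nk: "3*k + 6 \<le> n"
  shows "(\<Sum>d | length d = k. pmf (V (replicate n False)) (R @ d)) \<le> 2 / (real n * (real n - 1))"
proof -
  define p where "p = pmf (V (replicate n False))"
  define A where "A = (\<lambda>d. R @ d) ` {d. length d = k}"
  have "(\<Sum>d | length d = k. p (R @ d)) = (\<Sum>z\<in>A. p z)"
    unfolding A_def by (simp add: sum.reindex inj_on_def)
  also have "\<dots> \<le> 2 / (real n * (real n - 1))"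
  proof (rule sum_le_if_count_symmetric)
    show "0 \<le> p z" for z by (simp add: p_def)
    have "set_pmf (V (replicate n False)) \<subseteq> {z. length z = n}"
      using V unfolding unary_unbiased_def by simp
    then show "(\<Sum>z | length z = n. p z) = 1"
      unfolding p_def by (rule sum_pmf_eq_1[OF finite_bool_lists])
    show "p z = p z'"
      if "length z = n" "length z' = n" "count_list z True = count_list z' True" for z z'
      unfolding p_def using that
      by (intro unary_unbiased_pmf_mset[OF V] mset_eq_if_count_list_True_eq) simp_all
    show "A \<subseteq> {z. length z = n}" using R by (auto simp: A_def)
    fix r
    show "real (card {z \<in> A. count_list z True = r})
        \<le> 2 / (real n * (real n - 1)) * real (n choose r)"
    proof (cases "2 \<le> r")
      case True
      then obtain j where r: "r = j + 2" by (metis le_add_diff_inverse2)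
      have "{z \<in> A. count_list z True = r}
          = (\<lambda>d. R @ d) ` {d. length d = k \<and> count_list d True = j}"
        using R r by (auto simp: A_def)
      then have "card {z \<in> A. count_list z True = r} = k choose j"
        by (simp add: card_image inj_on_def card_bool_lists_count_True)
      then show ?thesis using r binomial_ratio_shift2_le[OF nk, of j] by simp
    next
      case False
      then have no_level: "{z \<in> A. count_list z True = r} = {}" using R by (auto simp: A_def)
      have "0 < real n * (real n - 1)" using nk by simp
      then show ?thesis unfolding no_level by simp
    qed
  qed
  finally show ?thesis unfolding p_def .
qed

lemma expectation_HLB_gain_from_odd_level:
  assumes V: "unary_unbiased n V" and n: "n = 2*m + 2 + k" and "even k" and s: "length s = k"
  shows "measure_pmf.expectation (V (replicate (2*m) True @ [False, False] @ s))
           (HLB_gain \<delta> n (replicate (2*m) True @ [False, False] @ s))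
       = (\<Sum>t | length t = k. (HLB \<delta> n (replicate (2*m + 2) True @ t) - 2*m)
            * pmf (V (replicate n False)) (replicate (2*m) False @ [True, True] @ xor_bits t s))"
proof -
  define pre where "pre = replicate (2*m) True @ [False, False]"
  define x where "x = pre @ s"
  define R where "R = replicate (2*m + 2) True"
  define p where "p = pmf (V (replicate n False))"
  define G where "G y = HLB_gain \<delta> n x y * p (xor_bits y x)" for y
  have "length x = n" using n s by (simp add: x_def pre_def)
  have "set_pmf (V x) \<subseteq> {y. length y = n}"
    using V \<open>length x = n\<close> unfolding unary_unbiased_def by blast
  then have "measure_pmf.expectation (V x) (HLB_gain \<delta> n x)
      = (\<Sum>y | length y = n. HLB_gain \<delta> n x y * pmf (V x) y)"
    by (intro integral_measure_pmf_real) auto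
  also have "\<dots> = (\<Sum>y | length y = (2*m + 2) + k. G y)"
    using unary_unbiased_pmf_xor_bits[OF V \<open>length x = n\<close>] n
    by (intro sum.cong) (simp_all add: G_def p_def)
  also have "\<dots> = (\<Sum>u | length u = 2*m + 2. \<Sum>t | length t = k. G (u @ t))"
    by (rule sum_bool_lists_append)
  also have "\<dots> = (\<Sum>u | length u = 2*m + 2. \<Sum>t | length t = k.
      if u = R then (HLB \<delta> n (R @ t) - 2*m) * p (xor_bits (R @ t) x) else 0)"
    using HLB_gain_from_odd_level[OF _ _ s n \<open>even k\<close>]
    by (intro sum.cong refl) (simp add: G_def R_def x_def pre_def)
  also have "\<dots> = (\<Sum>t | length t = k. (HLB \<delta> n (R @ t) - 2*m) * p (xor_bits (R @ t) x))"
    by (subst sum.swap) (simp add: R_def)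
  also have "\<dots> = (\<Sum>t | length t = k.
      (HLB \<delta> n (R @ t) - 2*m) * p (replicate (2*m) False @ [True, True] @ xor_bits t s))"
  proof -
    have R: "R = replicate (length pre) True" by (simp add: R_def pre_def)
    have "xor_bits (R @ t) x = xor_bits R pre @ xor_bits t s" for t
      unfolding x_def using R by (intro xor_bits_append) simp
    moreover have "xor_bits R pre = replicate (2*m) False @ [True, True]"
      unfolding R xor_bits_replicate_True by (simp add: pre_def)
    ultimately show ?thesis by simp
  qed
  finally show ?thesis by (simp add: x_def pre_def R_def p_def)
qed

lemma expectation_HLB_gain_uniform_suffix:
  assumes V: "unary_unbiased n V" and n: "n = 2*m + 2 + k" and "even k"
  shows "measure_pmf.expectation
           (map_pmf ((@) (replicate (2*m) True @ [False, False])) (pmf_of_set {s. length s = k})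
              \<bind> (\<lambda>x. map_pmf (\<lambda>y. (x, y)) (V x)))
           (\<lambda>(x, y). HLB_gain \<delta> n x y)
       = (\<Sum>t | length t = k. HLB \<delta> n (replicate (2*m + 2) True @ t) - 2*m)
         * (\<Sum>d | length d = k.
              pmf (V (replicate n False)) (replicate (2*m) False @ [True, True] @ d))
         / 2 ^ k"
proof -
  define S where "S = {s :: bool list. length s = k}"
  define pre where "pre = replicate (2*m) True @ [False, False]"
  define H where "H t = HLB \<delta> n (replicate (2*m + 2) True @ t) - 2*m" for t
  define q where
    "q d = pmf (V (replicate n False)) (replicate (2*m) False @ [True, True] @ d)" for d
  have "replicate k False \<in> S" by (simp add: S_def)
  then have "S \<noteq> {}" by blast
  have "finite (set_pmf (V (pre @ s)))" if "s \<in> S" for s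
    using V that n unfolding unary_unbiased_def
    by (intro finite_subset[OF _ finite_bool_lists[of n]]) (simp add: S_def pre_def)
  then have "measure_pmf.expectation (pmf_of_set S \<bind> (\<lambda>s. map_pmf (\<lambda>y. (pre @ s, y)) (V (pre @ s))))
        (\<lambda>(x, y). HLB_gain \<delta> n x y)
      = (\<Sum>s\<in>S. measure_pmf.expectation (V (pre @ s)) (HLB_gain \<delta> n (pre @ s))) / card S"
    using \<open>S \<noteq> {}\<close>
    by (subst pmf_expectation_bind_pmf_of_set)
      (simp_all add: S_def sum_distrib_left divide_inverse_commute)
  also have "\<dots> = (\<Sum>s\<in>S. \<Sum>t\<in>S. H t * q (xor_bits t s)) / 2 ^ k"
    using expectation_HLB_gain_from_odd_level[OF V n \<open>even k\<close>]
    by (simp add: S_def pre_def H_def q_def card_bool_lists)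
  also have "\<dots> = (\<Sum>t\<in>S. H t * (\<Sum>s\<in>S. q (xor_bits t s))) / 2 ^ k"
    by (subst sum.swap) (simp add: sum_distrib_left)
  also have "\<dots> = (\<Sum>t\<in>S. H t) * (\<Sum>d\<in>S. q d) / 2 ^ k"
    by (simp add: S_def sum_bool_lists_xor_bits sum_distrib_right)
  finally show ?thesis
    by (simp add: bind_map_pmf S_def pre_def H_def q_def)
qed

lemma expectation_HLB_gain_uniform_suffix_le:
  assumes V: "unary_unbiased n V" and n: "n = 2*m + 2 + k" and "even k" "3*k + 6 \<le> n" "0 \<le> \<delta>"
  shows "measure_pmf.expectation
           (map_pmf ((@) (replicate (2*m) True @ [False, False])) (pmf_of_set {s. length s = k})
              \<bind> (\<lambda>x. map_pmf (\<lambda>y. (x, y)) (V x)))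
           (\<lambda>(x, y). HLB_gain \<delta> n x y)
       \<le> 12 / (real n * (real n - 1))"
proof -
  define S where "S = (\<Sum>t | length t = k. HLB \<delta> n (replicate (2*m + 2) True @ t) - 2*m)"
  define P where
    "P = (\<Sum>d | length d = k. pmf (V (replicate n False)) (replicate (2*m) False @ [True, True] @ d))"
  have "S \<le> 6 * 2 ^ k"
    unfolding S_def using assms by (intro sum_HLB_replicate_True_append_le)
  moreover have "P \<le> 2 / (real n * (real n - 1))"
    using sum_pmf_prefix_le[OF V, of "replicate (2*m) False @ [True, True]" k] assms
    by (simp add: P_def)
  moreover have "0 \<le> P" unfolding P_def by (simp add: sum_nonneg)
  ultimately have "S * P / 2 ^ k \<le> (6 * 2 ^ k) * (2 / (real n * (real n - 1))) / 2 ^ k"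
    by (intro divide_right_mono mult_mono) simp_all
  then show ?thesis
    using expectation_HLB_gain_uniform_suffix[OF V n \<open>even k\<close>, of \<delta>] by (simp add: S_def P_def)
qed

theorem lemma8:
  fixes n m :: nat and \<delta> :: real
    and V :: "bool list \<Rightarrow> bool list pmf"
    and X :: "bool list pmf"
  assumes n_even: "even n" and n_pos: "n > 0"
    and m_lo: "real n / 3 \<le> real m" and m_hi: "real m \<le> real n / 2 - 1"
    and delta: "0 < \<delta>" "\<delta> < 2"
    and X_supp: "set_pmf X \<subseteq> {x. length x = n \<and> DLB n x = 2*m+1}"
    and X_suffix: "X = bind_pmf X (\<lambda>x. map_pmf (\<lambda>s. take (2*m+2) x @ s)
                          (pmf_of_set {s :: bool list. length s = n - (2*m+2)}))"
    and V: "unary_unbiased n V"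
  shows "measure_pmf.expectation (bind_pmf X (\<lambda>x. map_pmf (\<lambda>y. (x, y)) (V x)))
           (\<lambda>(x, y). (HLB \<delta> n y - HLB \<delta> n x) * (if DLB n y \<ge> DLB n x then 1 else 0))
         \<le> 16 / (real n)^2"
proof -
  define k where "k = n - (2*m + 2)"
  have "real (2*m + 2) \<le> real n" "real n \<le> real (3*m)"
    using m_lo m_hi by simp_all
  then have "2*m + 2 \<le> n" "n \<le> 3*m"
    by (simp_all only: of_nat_le_iff)
  then have n: "n = 2*m + 2 + k" and "even k" and nk: "3*k + 6 \<le> n"
    using n_even unfolding k_def by presburger+
  have "take (2*m + 2) x = replicate (2*m) True @ [False, False]" if "x \<in> set_pmf X" for x
  proof (rule take_dlb_odd)
    have "length x = n" "DLB n x = 2*m + 1" using X_supp that by auto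
    then show "dlb x = 2*m + 1" using DLB_eq_dlb[of x] n_even by simp
  qed
  then have "X = map_pmf ((@) (replicate (2*m) True @ [False, False]))
                   (pmf_of_set {s. length s = k})"
    by (subst X_suffix) (simp add: k_def cong: bind_pmf_cong)
  then have "measure_pmf.expectation (bind_pmf X (\<lambda>x. map_pmf (\<lambda>y. (x, y)) (V x)))
           (\<lambda>(x, y). (HLB \<delta> n y - HLB \<delta> n x) * (if DLB n y \<ge> DLB n x then 1 else 0))
      \<le> 12 / (real n * (real n - 1))"
    using expectation_HLB_gain_uniform_suffix_le[OF V n \<open>even k\<close> nk, of \<delta>] delta
    by (simp add: HLB_gain_def)
  also have "\<dots> \<le> 16 / (real n)^2"
    using nk by (simp add: field_simps power2_eq_square)
  finally show ?thesis .
qed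

end
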